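(* On $\mathcal H$, the operator $H_{\rm string}$ is positive semidefinite, its nullspace is exactly $S_{\rm string}$, and its smallest nonzero eigenvalue is $2$; more precisely, each particle-position basis configuration (one occupied edge per line) whose occupied edges form $L$ connected components is an eigenvector of $H_{\rm string}$ with eigenvalue $2L-2$. Moreover $H_{\rm string}$ commutes with every $n_{e,\alpha}$ and with every $H^p_{\rm prop}$, hence with $H(\lambda)$ for all $\lambda\in[0,1]$.
   Context: Grid. Fix $n\ge1$. Vertices are $(i,j)$ with $i,j\in\{0,\dots,n\}$; $(0,0)$ is the top and $(n,n)$ the bottom vertex. For a vertex $(i,j)$ and $x\in\{0,1\}$, the edge $(i,j,x)$ joins $(i,j)$ (upper endpoint) to $(i+1-x,j+x)$ (lower endpoint), whenever the latter is a vertex. It lies on line $w=i+j+1$ and has horizontal coordinate $t=n+j-i+x$. $E_w$ is the set of edges on line $w$. $\mathcal H=\bigotimes_{w=1}^{2n}(\mathbb C^{E_w}\otimes\mathbb C^2)$ with basis $|e,\alpha\rangle_w$ (particle $w$ on edge $e$, qubit $\alpha$); $n_{e,\alpha}=|e,\alpha\rangle\langle e,\alpha|_w$, $N_e=n_{e,0}+n_{e,1}$. Strings: for $z\in\{0,1\}^{2n}$ of weight $n$, $v_0=(0,0)$, $v_s=(\#\{k\le s:z_k=0\},\#\{k\le s:z_k=1\})$, $e_s(z)=(i,j,z_s)$ with $(i,j)=v_{s-1}$; $|x\rangle|z\rangle=\bigotimes_w|e_w(z),x_w\rangle_w$; $S_{\rm string}=\mathrm{span}\{|x\rangle|z\rangle: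 x\in\{0,1\}^{2n},\mathrm{wt}(z)=n\}$. $H_{\rm string}=\sum_{v\notin\{(0,0),(n,n)\}}(N^{\rm up}_v+N^{\rm down}_v-2N^{\rm up}_vN^{\rm down}_v)$ where $N^{\rm up}_v$ (resp. $N^{\rm down}_v$) is the sum of $N_e$ over existing edges $e$ with lower (resp. upper) endpoint $v$. Plaquette $p=(i,j)$, $i,j\in\{0,\dots,n-1\}$: $w_p=i+j+1$, left edges $e_1=(i,j,0)$, $e_2=(i+1,j,1)$, right edges $e_3=(i,j,1)$, $e_4=(i,j+1,0)$, arbitrary two-qubit unitary $U_p$; $H^p_{\rm prop}=-\sum_{\alpha,\beta,\gamma,\delta}\langle\beta\delta|U_p|\alpha\gamma\rangle|e_3,\beta\rangle\langle e_1,\alpha|_{w_p}\otimes|e_4,\delta\rangle\langle e_2,\gamma|_{w_p+1}+\text{h.c.}$. $H(\lambda)=H_{\rm string}+\sum_p(N_{e_1}N_{e_2}+N_{e_3}N_{e_4}+\lambda H^p_{\rm prop})+\sqrt{1-\lambda^2}(N_{(0,0,1)}+N_{(n-1,n,0)})+\sum_w\sum_{e\in E_w,t(e)\le n}n_{e,1}$. *)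

theory Defs
  imports Complex_Main
begin

(* Edges (i,j,x): upper endpoint (i,j), lower endpoint (i+1-x, j+x); qubits are 0/1 (nat). *)
type_synonym edge = "nat \<times> nat \<times> nat"
type_synonym vertex = "nat \<times> nat"
(* a basis configuration: line w \<mapsto> (occupied edge, qubit value) *)
type_synonym conf = "nat \<Rightarrow> edge \<times> nat"
(* operators on H, given by their matrix entries in the particle-position/qubit basis *)
type_synonym kernel = "conf \<Rightarrow> conf \<Rightarrow> complex"

definition Vert :: "nat \<Rightarrow> vertex set" where
  "Vert n = {(i,j). i \<le> n \<and> j \<le> n}"

definition upper :: "edge \<Rightarrow> vertex" where
  "upper e = (case e of (i,j,x) \<Rightarrow> (i,j))"

definition lower :: "edge \<Rightarrow> vertex" where
  "lower e = (case e of (i,j,x) \<Rightarrow> (i+1-x, j+x))"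

definition line :: "edge \<Rightarrow> nat" where
  "line e = (case e of (i,j,x) \<Rightarrow> i+j+1)"

definition tcoord :: "nat \<Rightarrow> edge \<Rightarrow> nat" where
  "tcoord n e = (case e of (i,j,x) \<Rightarrow> n+j-i+x)"

definition Edges :: "nat \<Rightarrow> edge set" where
  "Edges n = {(i,j,x). x \<le> 1 \<and> (i,j) \<in> Vert n \<and> (i+1-x, j+x) \<in> Vert n}"

definition Elin :: "nat \<Rightarrow> nat \<Rightarrow> edge set" where
  "Elin n w = {e \<in> Edges n. line e = w}"

definition dflt :: "edge \<times> nat" where "dflt = ((0,0,0),0)"

(* basis of H: one particle on each line w in 1..2n, with a qubit; extensional outside *)
definition Conf :: "nat \<Rightarrow> conf set" where
  "Conf n = {c. \<forall>w. (w \<in> {1..2*n} \<longrightarrow> fst (c w) \<in> Elin n w \<and> snd (c w) \<le> 1)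
                   \<and> (w \<notin> {1..2*n} \<longrightarrow> c w = dflt)}"

definition Vec :: "nat \<Rightarrow> (conf \<Rightarrow> complex) set" where
  "Vec n = {\<psi>. \<forall>c. c \<notin> Conf n \<longrightarrow> \<psi> c = 0}"

definition ket :: "conf \<Rightarrow> conf \<Rightarrow> complex" where
  "ket s = (\<lambda>c. if c = s then 1 else 0)"

definition apply_op :: "nat \<Rightarrow> kernel \<Rightarrow> (conf \<Rightarrow> complex) \<Rightarrow> (conf \<Rightarrow> complex)" where
  "apply_op n A \<psi> = (\<lambda>c. if c \<in> Conf n then (\<Sum>c'\<in>Conf n. A c c' * \<psi> c') else 0)"

definition opmul :: "nat \<Rightarrow> kernel \<Rightarrow> kernel \<Rightarrow> kernel" where
  "opmul n A B = (\<lambda>c c''. \<Sum>c'\<in>Conf n. A c c' * B c' c'')"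

definition commute :: "nat \<Rightarrow> kernel \<Rightarrow> kernel \<Rightarrow> bool" where
  "commute n A B \<longleftrightarrow> (\<forall>c\<in>Conf n. \<forall>c'\<in>Conf n. opmul n A B c c' = opmul n B A c c')"

definition hermitian :: "nat \<Rightarrow> kernel \<Rightarrow> bool" where
  "hermitian n A \<longleftrightarrow> (\<forall>c\<in>Conf n. \<forall>c'\<in>Conf n. A c c' = cnj (A c' c))"

definition psd :: "nat \<Rightarrow> kernel \<Rightarrow> bool" where
  "psd n A \<longleftrightarrow> hermitian n A \<and>
     (\<forall>\<psi>\<in>Vec n. let q = (\<Sum>c\<in>Conf n. cnj (\<psi> c) * apply_op n A \<psi> c) in Im q = 0 \<and> Re q \<ge> 0)"

definition is_eigenvalue :: "nat \<Rightarrow> kernel \<Rightarrow> complex \<Rightarrow> bool" where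
  "is_eigenvalue n A \<mu> \<longleftrightarrow> (\<exists>\<psi>\<in>Vec n. \<psi> \<noteq> (\<lambda>_. 0) \<and> apply_op n A \<psi> = (\<lambda>c. \<mu> * \<psi> c))"

definition nop :: "edge \<Rightarrow> nat \<Rightarrow> kernel" where
  "nop e \<alpha> = (\<lambda>c c'. if c = c' \<and> c (line e) = (e, \<alpha>) then 1 else 0)"

definition Nop :: "edge \<Rightarrow> kernel" where
  "Nop e = (\<lambda>c c'. nop e 0 c c' + nop e 1 c c')"

definition Nup :: "nat \<Rightarrow> vertex \<Rightarrow> kernel" where
  "Nup n v = (\<lambda>c c'. \<Sum>e\<in>{e\<in>Edges n. lower e = v}. Nop e c c')"

definition Ndown :: "nat \<Rightarrow> vertex \<Rightarrow> kernel" where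
  "Ndown n v = (\<lambda>c c'. \<Sum>e\<in>{e\<in>Edges n. upper e = v}. Nop e c c')"

definition Hstring :: "nat \<Rightarrow> kernel" where
  "Hstring n = (\<lambda>c c'. \<Sum>v\<in>Vert n - {(0,0),(n,n)}.
      Nup n v c c' + Ndown n v c c' - 2 * opmul n (Nup n v) (Ndown n v) c c')"

definition strvtx :: "(nat \<Rightarrow> nat) \<Rightarrow> nat \<Rightarrow> vertex" where
  "strvtx z s = (card {k\<in>{1..s}. z k = 0}, card {k\<in>{1..s}. z k = 1})"

definition stredge :: "(nat \<Rightarrow> nat) \<Rightarrow> nat \<Rightarrow> edge" where
  "stredge z s = (fst (strvtx z (s-1)), snd (strvtx z (s-1)), z s)"

definition strconf :: "nat \<Rightarrow> (nat \<Rightarrow> nat) \<Rightarrow> (nat \<Rightarrow> nat) \<Rightarrow> conf" where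
  "strconf n x z = (\<lambda>w. if w \<in> {1..2*n} then (stredge z w, x w) else dflt)"

definition StrConf :: "nat \<Rightarrow> conf set" where
  "StrConf n = {strconf n x z | x z. (\<forall>k\<in>{1..2*n}. x k \<le> 1 \<and> z k \<le> 1)
                                   \<and> card {k\<in>{1..2*n}. z k = 1} = n}"

definition Sstring :: "nat \<Rightarrow> (conf \<Rightarrow> complex) set" where
  "Sstring n = {\<psi>. \<exists>a. \<psi> = (\<lambda>c. \<Sum>s\<in>StrConf n. a s * ket s c)}"

definition Occ :: "nat \<Rightarrow> conf \<Rightarrow> edge set" where
  "Occ n c = {fst (c w) | w. w \<in> {1..2*n}}"

definition share :: "edge \<Rightarrow> edge \<Rightarrow> bool" where
  "share e f \<longleftrightarrow> {upper e, lower e} \<inter> {upper f, lower f} \<noteq> {}"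

definition ncomp :: "nat \<Rightarrow> conf \<Rightarrow> nat" where
  "ncomp n c = card (Occ n c // ({(e,f). e \<in> Occ n c \<and> f \<in> Occ n c \<and> share e f}\<^sup>*))"

definition Plaq :: "nat \<Rightarrow> vertex set" where
  "Plaq n = {(i,j). i < n \<and> j < n}"

definition pe1 :: "vertex \<Rightarrow> edge" where "pe1 p = (fst p, snd p, 0)"
definition pe2 :: "vertex \<Rightarrow> edge" where "pe2 p = (fst p + 1, snd p, 1)"
definition pe3 :: "vertex \<Rightarrow> edge" where "pe3 p = (fst p, snd p, 1)"
definition pe4 :: "vertex \<Rightarrow> edge" where "pe4 p = (fst p, snd p + 1, 0)"

(* two-qubit operator: U (beta,delta) (alpha,gamma) = <beta delta|U|alpha gamma> *)
type_synonym qop = "nat \<times> nat \<Rightarrow> nat \<times> nat \<Rightarrow> complex"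

definition unitary2 :: "qop \<Rightarrow> bool" where
  "unitary2 U \<longleftrightarrow> (\<forall>a\<in>{0,1}\<times>{0,1}. \<forall>b\<in>{0,1}\<times>{0,1}.
      (\<Sum>k\<in>{0,1}\<times>{0,1}. cnj (U k a) * U k b) = (if a = b then 1 else 0))
    \<and> (\<forall>a\<in>{0,1}\<times>{0,1}. \<forall>b\<in>{0,1}\<times>{0,1}.
      (\<Sum>k\<in>{0,1}\<times>{0,1}. U a k * cnj (U b k)) = (if a = b then 1 else 0))"

(* |e3,beta><e1,alpha|_w (x) |e4,delta><e2,gamma|_{w+1} (x) identity on the other lines *)
definition hop :: "vertex \<Rightarrow> nat \<Rightarrow> nat \<Rightarrow> nat \<Rightarrow> nat \<Rightarrow> kernel" where
  "hop p \<alpha> \<beta> \<gamma> \<delta> = (\<lambda>c c'. let w = fst p + snd p + 1 in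
     if c' w = (pe1 p, \<alpha>) \<and> c' (w+1) = (pe2 p, \<gamma>) \<and> c w = (pe3 p, \<beta>) \<and> c (w+1) = (pe4 p, \<delta>)
        \<and> (\<forall>v. v \<noteq> w \<and> v \<noteq> w+1 \<longrightarrow> c v = c' v) then 1 else 0)"

definition Aprop :: "qop \<Rightarrow> vertex \<Rightarrow> kernel" where
  "Aprop U p = (\<lambda>c c'. - (\<Sum>\<alpha>\<in>{0,1}. \<Sum>\<beta>\<in>{0,1}. \<Sum>\<gamma>\<in>{0,1}. \<Sum>\<delta>\<in>{0::nat,1}.
      U (\<beta>,\<delta>) (\<alpha>,\<gamma>) * hop p \<alpha> \<beta> \<gamma> \<delta> c c'))"

definition Hprop :: "qop \<Rightarrow> vertex \<Rightarrow> kernel" where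
  "Hprop U p = (\<lambda>c c'. Aprop U p c c' + cnj (Aprop U p c' c))"

definition Htot :: "nat \<Rightarrow> (vertex \<Rightarrow> qop) \<Rightarrow> real \<Rightarrow> kernel" where
  "Htot n Us lam = (\<lambda>c c'. Hstring n c c'
     + (\<Sum>p\<in>Plaq n. opmul n (Nop (pe1 p)) (Nop (pe2 p)) c c' + opmul n (Nop (pe3 p)) (Nop (pe4 p)) c c'
                      + complex_of_real lam * Hprop (Us p) p c c')
     + complex_of_real (sqrt (1 - lam\<^sup>2)) * (Nop (0,0,1) c c' + Nop (n-1,n,0) c c')
     + (\<Sum>w\<in>{1..2*n}. \<Sum>e\<in>{e\<in>Elin n w. tcoord n e \<le> n}. nop e 1 c c'))"

end

theory Submission imports Defs "HOL-Library.FuncSet" begin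

(*
  The string Hamiltonian is diagonal in the particle-position/qubit basis.  On a basis
  configuration c the vertex term at v equals 1 exactly when one, but not both, of the two
  particles on the lines meeting v (lines dg v and dg v + 1) touches v.  Call k a break of c
  when the edges on lines k and k+1 do not meet; every break produces exactly two such
  vertices, so H_string acts on c by 2 * #breaks.
*)


section \<open>The grid and its configurations\<close>

(* the diagonal index i + j of a vertex; lines w meet diagonals w - 1 and w *)
definition dg :: "vertex \<Rightarrow> nat" where "dg v = fst v + snd v"

lemma edge_facts:
  assumes "e \<in> Edges n"
  shows "dg (lower e) = line e \<and> Suc (dg (upper e)) = line e \<and> 1 \<le> line e \<and> line e \<le> 2*n
     \<and> upper e \<in> Vert n \<and> lower e \<in> Vert n"
proof -
  obtain i j x where e: "e = (i,j,x)" by (cases e) auto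
  show ?thesis using assms unfolding e Edges_def Vert_def dg_def lower_def upper_def line_def
    by auto
qed

lemma conf_facts:
  assumes "c \<in> Conf n" "w \<in> {1..2*n}"
  shows "fst (c w) \<in> Edges n \<and> line (fst (c w)) = w \<and> snd (c w) \<le> 1"
  using assms unfolding Conf_def Elin_def by auto

lemma conf_out: "c \<in> Conf n \<Longrightarrow> w \<notin> {1..2*n} \<Longrightarrow> c w = dflt"
  unfolding Conf_def by auto

lemma finite_Vert: "finite (Vert n)"
proof -
  have "Vert n \<subseteq> {..n} \<times> {..n}" unfolding Vert_def by auto
  then show ?thesis by (rule finite_subset) auto
qed

lemma finite_Edges: "finite (Edges n)"
proof -
  have "Edges n \<subseteq> {..n} \<times> {..n} \<times> {..1::nat}"
    unfolding Edges_def Vert_def by auto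
  then show ?thesis by (rule finite_subset) auto
qed

(* a configuration is determined by its restriction to the lines 1..2n *)
lemma finite_Conf: "finite (Conf n)"
proof -
  let ?ext = "\<lambda>f::nat \<Rightarrow> edge \<times> nat. \<lambda>w. if w \<in> {1..2*n} then f w else dflt"
  let ?F = "PiE {1..2*n} (\<lambda>_. Edges n \<times> {..1::nat})"
  have "Conf n \<subseteq> ?ext ` ?F"
  proof
    fix c assume c: "c \<in> Conf n"
    have "c = ?ext (restrict c {1..2*n})"
      using conf_out[OF c] by (auto simp: restrict_def)
    moreover have "restrict c {1..2*n} \<in> ?F"
      using conf_facts[OF c] by (auto simp: mem_Times_iff)
    ultimately show "c \<in> ?ext ` ?F" by blast
  qed
  moreover have "finite ?F" by (intro finite_PiE) (auto simp: finite_Edges)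
  ultimately show ?thesis by (meson finite_imageI finite_subset)
qed


section \<open>Diagonal kernels\<close>

definition diagonal :: "nat \<Rightarrow> kernel \<Rightarrow> (conf \<Rightarrow> complex) \<Rightarrow> bool" where
  "diagonal n A d \<longleftrightarrow> (\<forall>c c'. c \<noteq> c' \<longrightarrow> A c c' = 0) \<and> (\<forall>c\<in>Conf n. A c c = d c)"

lemma diagonal_entry:
  assumes "diagonal n A d" "c \<in> Conf n"
  shows "A c c' = (if c' = c then d c else 0)"
  using assms unfolding diagonal_def by auto

lemma diagonal_sum:
  assumes "diagonal n A d" "c \<in> Conf n"
  shows "(\<Sum>c'\<in>Conf n. A c c' * f c') = d c * f c"
proof -
  have "(\<Sum>c'\<in>Conf n. A c c' * f c') = (\<Sum>c'\<in>Conf n. if c' = c then d c * f c else 0)"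
    by (intro sum.cong) (auto simp: diagonal_entry[OF assms])
  then show ?thesis using assms(2) finite_Conf by simp
qed

lemma apply_diagonal:
  assumes "diagonal n A d"
  shows "apply_op n A \<psi> = (\<lambda>c. if c \<in> Conf n then d c * \<psi> c else 0)"
  using diagonal_sum[OF assms] unfolding apply_op_def by auto

lemma opmul_diagonal_left:
  assumes "diagonal n A d" "c \<in> Conf n"
  shows "opmul n A B c c' = d c * B c c'"
  unfolding opmul_def using diagonal_sum[OF assms] .

lemma opmul_diagonal_right:
  assumes A: "diagonal n A d" and c': "c' \<in> Conf n"
  shows "opmul n B A c c' = B c c' * d c'"
proof -
  have "(\<Sum>x\<in>Conf n. B c x * A x c') = (\<Sum>x\<in>Conf n. if x = c' then B c c' * d c' else 0)"
    using A unfolding diagonal_def by (intro sum.cong) auto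
  then show ?thesis unfolding opmul_def using c' finite_Conf by simp
qed

lemma opmul_offdiag:
  assumes "\<And>x y. x \<noteq> y \<Longrightarrow> A x y = 0" "\<And>x y. x \<noteq> y \<Longrightarrow> B x y = 0" "c \<noteq> c'"
  shows "opmul n A B c c' = 0"
  unfolding opmul_def
proof (rule sum.neutral, intro ballI)
  fix x show "A c x * B x c' = 0" using assms by (cases "x = c") auto
qed

lemma commute_diagonal:
  assumes A: "diagonal n A d"
    and B: "\<forall>c\<in>Conf n. \<forall>c'\<in>Conf n. B c c' \<noteq> 0 \<longrightarrow> d c = d c'"
  shows "commute n A B"
  unfolding commute_def
proof (intro ballI)
  fix c c' assume c: "c \<in> Conf n" and c': "c' \<in> Conf n"
  show "opmul n A B c c' = opmul n B A c c'"
    using opmul_diagonal_left[OF A c] opmul_diagonal_right[OF A c'] B c c'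
    by (cases "B c c' = 0") auto
qed

(* The quadratic form of a diagonal kernel is the weighted sum of the squared amplitudes. *)
lemma psd_diagonal:
  assumes A: "diagonal n A (\<lambda>c. of_real (r c))" and r: "\<forall>c\<in>Conf n. r c \<ge> 0"
  shows "psd n A"
  unfolding psd_def
proof (intro conjI ballI)
  show "hermitian n A" unfolding hermitian_def
  proof (intro ballI)
    fix c c' assume "c \<in> Conf n"
    then show "A c c' = cnj (A c' c)" using A by (cases "c = c'") (auto simp: diagonal_def)
  qed
next
  fix \<psi> :: "conf \<Rightarrow> complex"
  have "(\<Sum>c\<in>Conf n. cnj (\<psi> c) * apply_op n A \<psi> c)
      = (\<Sum>c\<in>Conf n. of_real (r c * (norm (\<psi> c))\<^sup>2))"
  proof (rule sum.cong)
    fix c assume "c \<in> Conf n"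
    then have "cnj (\<psi> c) * apply_op n A \<psi> c = of_real (r c) * (\<psi> c * cnj (\<psi> c))"
      by (simp add: apply_diagonal[OF A] algebra_simps)
    then show "cnj (\<psi> c) * apply_op n A \<psi> c = of_real (r c * (norm (\<psi> c))\<^sup>2)"
      by (simp add: complex_norm_square[symmetric])
  qed simp
  then show "let q = \<Sum>c\<in>Conf n. cnj (\<psi> c) * apply_op n A \<psi> c in Im q = 0 \<and> Re q \<ge> 0"
    using r by (simp add: Let_def sum_nonneg)
qed

lemma nullspace_diagonal:
  assumes A: "diagonal n A d"
  shows "{\<psi>\<in>Vec n. apply_op n A \<psi> = (\<lambda>_. 0)}
       = {\<psi>. \<forall>c. (c \<notin> Conf n \<or> d c \<noteq> 0) \<longrightarrow> \<psi> c = 0}"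
  unfolding apply_diagonal[OF A] Vec_def by (auto simp: fun_eq_iff)

lemma ket_eigenvector:
  assumes "diagonal n A d" "c \<in> Conf n"
  shows "apply_op n A (ket c) = (\<lambda>c'. d c * ket c c')"
  using assms by (auto simp: apply_diagonal ket_def)

lemma eigenvalue_diagonal:
  assumes A: "diagonal n A d"
  shows "is_eigenvalue n A \<mu> \<longleftrightarrow> (\<exists>c\<in>Conf n. \<mu> = d c)"
proof
  assume "is_eigenvalue n A \<mu>"
  then obtain \<psi> where v: "\<psi> \<in> Vec n" and nz: "\<psi> \<noteq> (\<lambda>_. 0)"
    and e: "apply_op n A \<psi> = (\<lambda>c. \<mu> * \<psi> c)"
    unfolding is_eigenvalue_def by blast
  obtain c where pc: "\<psi> c \<noteq> 0" using nz by auto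
  then have c: "c \<in> Conf n" using v unfolding Vec_def by auto
  have "d c * \<psi> c = \<mu> * \<psi> c" using fun_cong[OF e, of c] c by (simp add: apply_diagonal[OF A])
  then show "\<exists>c\<in>Conf n. \<mu> = d c" using pc c by auto
next
  assume "\<exists>c\<in>Conf n. \<mu> = d c"
  then obtain c where c: "c \<in> Conf n" and mu: "\<mu> = d c" by blast
  have "ket c \<in> Vec n" using c by (auto simp: Vec_def ket_def)
  moreover have "ket c \<noteq> (\<lambda>_. 0)" by (metis ket_def zero_neq_one)
  ultimately show "is_eigenvalue n A \<mu>"
    unfolding is_eigenvalue_def using ket_eigenvector[OF A c] mu by blast
qed


section \<open>Breaks and the diagonal of the string Hamiltonian\<close>

definition linked :: "conf \<Rightarrow> nat \<Rightarrow> bool" where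
  "linked c k \<longleftrightarrow> lower (fst (c k)) = upper (fst (c (Suc k)))"

definition brk :: "nat \<Rightarrow> conf \<Rightarrow> nat set" where
  "brk n c = {k\<in>{1..2*n-1}. \<not> linked c k}"

lemma finite_brk: "finite (brk n c)" unfolding brk_def by auto

definition frustrated :: "conf \<Rightarrow> vertex \<Rightarrow> bool" where
  "frustrated c v \<longleftrightarrow> (lower (fst (c (dg v))) = v) \<noteq> (upper (fst (c (Suc (dg v)))) = v)"

lemma Nop_offdiag: "c \<noteq> c' \<Longrightarrow> Nop e c c' = 0" by (simp add: Nop_def nop_def)
lemma Nup_offdiag: "c \<noteq> c' \<Longrightarrow> Nup n v c c' = 0" by (simp add: Nup_def Nop_offdiag)
lemma Ndown_offdiag: "c \<noteq> c' \<Longrightarrow> Ndown n v c c' = 0" by (simp add: Ndown_def Nop_offdiag)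

lemma Nop_diag:
  assumes c: "c \<in> Conf n" and e: "e \<in> Edges n"
  shows "Nop e c c = (if fst (c (line e)) = e then 1 else 0)"
proof -
  have "snd (c (line e)) \<le> 1" using conf_facts[OF c] edge_facts[OF e] by auto
  then show ?thesis unfolding Nop_def nop_def by (cases "c (line e)") auto
qed

lemma count_edges_on_line:
  assumes c: "c \<in> Conf n" and w: "w \<in> {1..2*n}"
    and line: "\<And>e. e \<in> Edges n \<Longrightarrow> P e \<Longrightarrow> line e = w"
  shows "(\<Sum>e\<in>{e\<in>Edges n. P e}. Nop e c c) = (if P (fst (c w)) then 1 else 0)"
proof -
  have "(\<Sum>e\<in>{e\<in>Edges n. P e}. Nop e c c) = (\<Sum>e\<in>{e\<in>Edges n. P e}. if e = fst (c w) then 1 else 0)"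
    using Nop_diag[OF c] line by (intro sum.cong) auto
  then show ?thesis using finite_Edges conf_facts[OF c w] by (simp add: sum.delta')
qed

lemma Nup_diag:
  assumes c: "c \<in> Conf n" and v: "dg v \<in> {1..2*n}"
  shows "Nup n v c c = (if lower (fst (c (dg v))) = v then 1 else 0)"
  unfolding Nup_def by (rule count_edges_on_line[OF c v]) (metis edge_facts)

lemma Ndown_diag:
  assumes c: "c \<in> Conf n" and v: "dg v < 2*n"
  shows "Ndown n v c c = (if upper (fst (c (Suc (dg v)))) = v then 1 else 0)"
  unfolding Ndown_def by (rule count_edges_on_line[OF c]) (use v edge_facts in auto)

lemma inner_vertex_dg: "v \<in> Vert n - {(0,0),(n,n)} \<Longrightarrow> 1 \<le> dg v \<and> dg v \<le> 2*n - 1"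
  unfolding Vert_def dg_def by auto

(* each vertex term N_up + N_down - 2 N_up N_down is the indicator of frustration *)
lemma Hstring_diag_frustrated:
  assumes c: "c \<in> Conf n"
  shows "Hstring n c c = of_nat (card {v\<in>Vert n - {(0,0),(n,n)}. frustrated c v})"
proof -
  let ?V = "Vert n - {(0,0),(n,n)}"
  have "Hstring n c c = (\<Sum>v\<in>?V. if frustrated c v then 1 else 0)"
    unfolding Hstring_def
  proof (rule sum.cong)
    fix v assume v: "v \<in> ?V"
    have "diagonal n (Nup n v) (\<lambda>c. Nup n v c c)" by (simp add: diagonal_def Nup_offdiag)
    then have "opmul n (Nup n v) (Ndown n v) c c = Nup n v c c * Ndown n v c c"
      by (rule opmul_diagonal_left[OF _ c])
    then show "Nup n v c c + Ndown n v c c - 2 * opmul n (Nup n v) (Ndown n v) c c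
             = (if frustrated c v then 1 else 0)"
      using Nup_diag[OF c, of v] Ndown_diag[OF c, of v] inner_vertex_dg[OF v]
      unfolding frustrated_def by auto
  qed simp
  then show ?thesis by (simp add: finite_Vert sum.inter_filter[symmetric])
qed

lemma break_vertices:
  assumes c: "c \<in> Conf n" and k: "k \<in> {1..2*n-1}"
  shows "lower (fst (c k)) \<in> Vert n - {(0,0),(n,n)} \<and> dg (lower (fst (c k))) = k
       \<and> upper (fst (c (Suc k))) \<in> Vert n - {(0,0),(n,n)} \<and> dg (upper (fst (c (Suc k)))) = k"
proof -
  have a: "fst (c k) \<in> Edges n" "line (fst (c k)) = k" using conf_facts[OF c, of k] k by auto
  have b: "fst (c (Suc k)) \<in> Edges n" "line (fst (c (Suc k))) = Suc k"
    using conf_facts[OF c, of "Suc k"] k by auto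
  have "dg (0,0) = 0" "dg (n,n) = 2*n" by (auto simp: dg_def)
  then show ?thesis using edge_facts[OF a(1)] edge_facts[OF b(1)] a(2) b(2) k by auto
qed

lemma frustrated_eq_breaks:
  assumes c: "c \<in> Conf n"
  shows "{v\<in>Vert n - {(0,0),(n,n)}. frustrated c v}
       = (\<lambda>k. lower (fst (c k))) ` brk n c \<union> (\<lambda>k. upper (fst (c (Suc k)))) ` brk n c"
    (is "?S = ?L \<union> ?U")
proof (intro equalityI subsetI)
  fix v assume v: "v \<in> ?S"
  then have "v \<in> Vert n - {(0,0),(n,n)}" by blast
  from inner_vertex_dg[OF this] have k: "dg v \<in> {1..2*n-1}" by simp
  show "v \<in> ?L \<union> ?U"
  proof (cases "lower (fst (c (dg v))) = v")
    case True
    then have "dg v \<in> brk n c" using v k by (auto simp: brk_def linked_def frustrated_def)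
    then show ?thesis using True by (metis UnI1 image_eqI)
  next
    case False
    then have up: "upper (fst (c (Suc (dg v)))) = v" using v by (auto simp: frustrated_def)
    then have "dg v \<in> brk n c" using False k by (auto simp: brk_def linked_def)
    then show ?thesis using up by (metis UnI2 image_eqI)
  qed
next
  fix v assume "v \<in> ?L \<union> ?U"
  then obtain k where k: "k \<in> brk n c"
    and "v = lower (fst (c k)) \<or> v = upper (fst (c (Suc k)))" by blast
  moreover have "k \<in> {1..2*n-1}" using k by (auto simp: brk_def)
  ultimately show "v \<in> ?S"
    using break_vertices[OF c] by (auto simp: brk_def linked_def frustrated_def)
qed

lemma card_frustrated:
  assumes c: "c \<in> Conf n"
  shows "card {v\<in>Vert n - {(0,0),(n,n)}. frustrated c v} = 2 * card (brk n c)"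
proof -
  let ?f = "\<lambda>k. lower (fst (c k))" and ?g = "\<lambda>k. upper (fst (c (Suc k)))"
  have bk: "\<And>k. k \<in> brk n c \<Longrightarrow> k \<in> {1..2*n-1}" by (auto simp: brk_def)
  have inj_f: "inj_on ?f (brk n c)" and inj_g: "inj_on ?g (brk n c)"
    by (auto intro!: inj_onI) (metis break_vertices[OF c] bk)+
  have disj: "?f ` brk n c \<inter> ?g ` brk n c = {}"
  proof (rule ccontr)
    assume "?f ` brk n c \<inter> ?g ` brk n c \<noteq> {}"
    then obtain k k' where k: "k \<in> brk n c" "k' \<in> brk n c" and eq: "?f k = ?g k'" by blast
    then have "k = k'" using break_vertices[OF c bk[OF k(1)]] break_vertices[OF c bk[OF k(2)]]
      by metis
    then show False using k eq by (auto simp: brk_def linked_def)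
  qed
  have "card (?f ` brk n c \<union> ?g ` brk n c) = card (?f ` brk n c) + card (?g ` brk n c)"
    by (rule card_Un_disjoint) (use finite_brk disj in auto)
  then show ?thesis unfolding frustrated_eq_breaks[OF c]
    using card_image[OF inj_f] card_image[OF inj_g] by simp
qed

theorem Hstring_diagonal: "diagonal n (Hstring n) (\<lambda>c. of_nat (2 * card (brk n c)))"
  unfolding diagonal_def
proof (intro conjI allI impI ballI)
  fix c c' :: conf assume "c \<noteq> c'"
  then show "Hstring n c c' = 0"
    unfolding Hstring_def by (simp add: Nup_offdiag Ndown_offdiag opmul_offdiag)
next
  fix c assume "c \<in> Conf n"
  then show "Hstring n c c = of_nat (2 * card (brk n c))"
    using Hstring_diag_frustrated card_frustrated by metis
qed


section \<open>Connected components of the occupied edges\<close>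

definition chained :: "conf \<Rightarrow> nat \<Rightarrow> nat \<Rightarrow> bool" where
  "chained c w w' \<longleftrightarrow> (\<forall>k. min w w' \<le> k \<and> k < max w w' \<longrightarrow> linked c k)"

definition adj :: "nat \<Rightarrow> conf \<Rightarrow> (edge \<times> edge) set" where
  "adj n c = {(e,f). e \<in> Occ n c \<and> f \<in> Occ n c \<and> share e f}"

lemma chained_refl: "chained c a a" unfolding chained_def by auto

lemma chained_sym: "chained c a b = chained c b a"
  unfolding chained_def by (simp add: min.commute max.commute)

lemma chained_trans: "chained c a b \<Longrightarrow> chained c b d \<Longrightarrow> chained c a d"
  unfolding chained_def
proof (intro allI impI)
  fix k assume ab: "\<forall>k. min a b \<le> k \<and> k < max a b \<longrightarrow> linked c k"
    and bd: "\<forall>k. min b d \<le> k \<and> k < max b d \<longrightarrow> linked c k"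
    and k: "min a d \<le> k \<and> k < max a d"
  have "(min a b \<le> k \<and> k < max a b) \<or> (min b d \<le> k \<and> k < max b d)" using k by linarith
  then show "linked c k" using ab bd by blast
qed

lemma chained_Suc: "chained c a (Suc a) = linked c a"
  unfolding chained_def by (auto simp: less_Suc_eq_le dest: le_antisym)

lemma Occ_iff: "x \<in> Occ n c \<longleftrightarrow> (\<exists>w\<in>{1..2*n}. x = fst (c w))"
  unfolding Occ_def by auto

lemma share_iff:
  assumes c: "c \<in> Conf n" and w: "w \<in> {1..2*n}" "w' \<in> {1..2*n}" and lt: "w < w'"
  shows "share (fst (c w)) (fst (c w')) \<longleftrightarrow> (w' = Suc w \<and> linked c w)"
proof -
  let ?e = "fst (c w)" and ?f = "fst (c w')"
  have e: "dg (lower ?e) = w" "Suc (dg (upper ?e)) = w"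
    using conf_facts[OF c w(1)] edge_facts by metis+
  have f: "dg (lower ?f) = w'" "Suc (dg (upper ?f)) = w'"
    using conf_facts[OF c w(2)] edge_facts by metis+
  have "share ?e ?f \<longleftrightarrow> upper ?e = upper ?f \<or> upper ?e = lower ?f \<or> lower ?e = upper ?f
      \<or> lower ?e = lower ?f"
    unfolding share_def by auto
  also have "\<dots> \<longleftrightarrow> lower ?e = upper ?f"
    using e f lt by (metis Suc_lessD less_irrefl_nat less_not_refl3)
  also have "\<dots> \<longleftrightarrow> (w' = Suc w \<and> linked c w)"
    using e f unfolding linked_def by metis
  finally show ?thesis .
qed

lemma adj_chained:
  assumes c: "c \<in> Conf n" and r: "(u, v) \<in> adj n c"
  shows "\<exists>w\<in>{1..2*n}. \<exists>w'\<in>{1..2*n}. u = fst (c w) \<and> v = fst (c w') \<and> chained c w w'"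
proof -
  from r obtain w w' where w: "w \<in> {1..2*n}" "w' \<in> {1..2*n}" "u = fst (c w)" "v = fst (c w')"
    and sh: "share u v"
    unfolding adj_def Occ_def by auto
  have share_sym: "share (fst (c w')) (fst (c w))" using sh w unfolding share_def by auto
  have "chained c w w'"
  proof (cases w w' rule: linorder_cases)
    case less
    then show ?thesis using share_iff[OF c w(1,2) less] sh w chained_Suc by auto
  next
    case equal then show ?thesis by (simp add: chained_refl)
  next
    case greater
    then show ?thesis using share_iff[OF c w(2,1) greater] share_sym chained_Suc chained_sym
      by auto
  qed
  then show ?thesis using w by blast
qed

lemma adj_path_chained:
  assumes c: "c \<in> Conf n" and r: "(a, b) \<in> (adj n c)\<^sup>*" and a: "a \<in> Occ n c"
  shows "b \<in> Occ n c \<and> chained c (line a) (line b)"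
  using r
proof (induction rule: rtrancl_induct)
  case base then show ?case using a chained_refl by auto
next
  case (step y z)
  obtain w w' where w: "w \<in> {1..2*n}" "w' \<in> {1..2*n}" "y = fst (c w)" "z = fst (c w')"
    "chained c w w'"
    using adj_chained[OF c step(2)] by blast
  then show ?case
    using step(3) chained_trans conf_facts[OF c w(1)] conf_facts[OF c w(2)] Occ_iff by metis
qed

lemma chained_adj_path:
  assumes c: "c \<in> Conf n"
  shows "w \<in> {1..2*n} \<Longrightarrow> w + d \<in> {1..2*n} \<Longrightarrow> chained c w (w+d) \<Longrightarrow>
    (fst (c w), fst (c (w+d))) \<in> (adj n c)\<^sup>* \<and> (fst (c (w+d)), fst (c w)) \<in> (adj n c)\<^sup>*"
proof (induction d)
  case 0 then show ?case by simp
next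
  case (Suc d)
  have q: "chained c w (w+d)" and l: "linked c (w+d)"
    using Suc.prems(3) unfolding chained_def by auto
  have wd: "w + d \<in> {1..2*n}" using Suc.prems by auto
  have "share (fst (c (w+d))) (fst (c (w + Suc d)))"
    using share_iff[OF c wd Suc.prems(2)] l by simp
  then have "(fst (c (w+d)), fst (c (w + Suc d))) \<in> adj n c"
    "(fst (c (w + Suc d)), fst (c (w+d))) \<in> adj n c"
    using wd Suc.prems(2) Occ_iff unfolding adj_def share_def by blast+
  then show ?case using Suc.IH[OF Suc.prems(1) wd q]
    by (meson rtrancl_into_rtrancl converse_rtrancl_into_rtrancl)
qed

lemma adj_iff_chained:
  assumes c: "c \<in> Conf n" and w: "w \<in> {1..2*n}" "w' \<in> {1..2*n}"
  shows "(fst (c w), fst (c w')) \<in> (adj n c)\<^sup>* \<longleftrightarrow> chained c w w'"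
proof
  assume "(fst (c w), fst (c w')) \<in> (adj n c)\<^sup>*"
  then show "chained c w w'" using adj_path_chained[OF c] Occ_iff w conf_facts[OF c] by metis
next
  assume q: "chained c w w'"
  show "(fst (c w), fst (c w')) \<in> (adj n c)\<^sup>*"
  proof (cases "w \<le> w'")
    case True
    then obtain d where "w' = w + d" using le_Suc_ex by blast
    then show ?thesis using chained_adj_path[OF c] w q by blast
  next
    case False
    then obtain d where "w = w' + d" using le_Suc_ex nat_le_linear by metis
    then show ?thesis using chained_adj_path[OF c, of w' d] w q chained_sym by blast
  qed
qed

definition run_starts :: "nat \<Rightarrow> conf \<Rightarrow> nat set" where
  "run_starts n c = {w\<in>{1..2*n}. w = 1 \<or> \<not> linked c (w - 1)}"

lemma card_run_starts:
  assumes n: "n \<ge> 1"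
  shows "card (run_starts n c) = Suc (card (brk n c))"
proof -
  have "run_starts n c = insert 1 (Suc ` brk n c)"
  proof (intro equalityI subsetI)
    fix w assume w: "w \<in> run_starts n c"
    show "w \<in> insert 1 (Suc ` brk n c)"
    proof (cases "w = 1")
      case False
      then have "w - 1 \<in> brk n c" "w = Suc (w - 1)" using w unfolding run_starts_def brk_def by auto
      then show ?thesis by blast
    qed simp
  next
    fix w assume "w \<in> insert 1 (Suc ` brk n c)"
    then show "w \<in> run_starts n c" using n unfolding run_starts_def brk_def by auto
  qed
  moreover have "1 \<notin> Suc ` brk n c" unfolding brk_def by auto
  ultimately show ?thesis by (simp add: card_image finite_brk)
qed

lemma run_starts_not_chained:
  assumes "s \<in> run_starts n c" "s' \<in> run_starts n c" "chained c s s'"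
  shows "s = s'"
proof (rule ccontr)
  assume ne: "s \<noteq> s'"
  have "\<not> linked c (max s s' - 1)" "1 \<le> min s s'" "min s s' < max s s'"
    using assms(1,2) ne unfolding run_starts_def by (auto simp: min_def max_def)
  then show False using assms(3) unfolding chained_def by simp
qed

lemma chained_to_run_start:
  assumes n: "n \<ge> 1" and w: "w \<in> {1..2*n}"
  shows "\<exists>s\<in>run_starts n c. chained c s w"
proof -
  let ?A = "{s\<in>run_starts n c. s \<le> w}"
  have finA: "finite ?A" unfolding run_starts_def by auto
  have "1 \<in> ?A" using w n unfolding run_starts_def by auto
  then have sA: "Max ?A \<in> ?A" using Max_in[OF finA] by blast
  have "chained c (Max ?A) w"
    unfolding chained_def
  proof (intro allI impI, rule ccontr)
    fix k assume k: "min (Max ?A) w \<le> k \<and> k < max (Max ?A) w" and nl: "\<not> linked c k"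
    then have k2: "Max ?A \<le> k" "k < w" using sA by auto
    then have "Suc k \<in> ?A" using nl w unfolding run_starts_def by auto
    then show False using Max_ge[OF finA] k2 by fastforce
  qed
  then show ?thesis using sA by blast
qed

(* the components are the classes of the run starts *)
theorem ncomp_eq:
  assumes c: "c \<in> Conf n" and n: "n \<ge> 1"
  shows "ncomp n c = Suc (card (brk n c))"
proof -
  let ?R = "(adj n c)\<^sup>*"
  let ?cls = "\<lambda>w. ?R `` {fst (c w)}"
  have St: "\<And>w. w \<in> run_starts n c \<Longrightarrow> w \<in> {1..2*n}" unfolding run_starts_def by auto
  have same_class: "?cls s = ?cls w \<longleftrightarrow> chained c s w"
    if s: "s \<in> {1..2*n}" and w: "w \<in> {1..2*n}" for s w
  proof
    assume "?cls s = ?cls w"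
    then have "fst (c w) \<in> ?cls s" by auto
    then show "chained c s w" using adj_iff_chained[OF c s w] by simp
  next
    assume "chained c s w"
    then have "(fst (c s), fst (c w)) \<in> ?R" "(fst (c w), fst (c s)) \<in> ?R"
      using adj_iff_chained[OF c s w] adj_iff_chained[OF c w s] chained_sym by blast+
    then show "?cls s = ?cls w" by (auto intro: rtrancl_trans)
  qed
  have "inj_on ?cls (run_starts n c)"
  proof (rule inj_onI)
    fix s s' assume "s \<in> run_starts n c" "s' \<in> run_starts n c" "?cls s = ?cls s'"
    then show "s = s'" using same_class St run_starts_not_chained by blast
  qed
  moreover have "?cls ` run_starts n c = Occ n c // ?R"
  proof (intro equalityI subsetI)
    fix X assume "X \<in> ?cls ` run_starts n c"
    then obtain w where w: "w \<in> run_starts n c" "X = ?cls w" by blast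
    then have "fst (c w) \<in> Occ n c" using St Occ_iff by blast
    then show "X \<in> Occ n c // ?R" using w by (auto intro: quotientI)
  next
    fix X assume "X \<in> Occ n c // ?R"
    then obtain x where "x \<in> Occ n c" "X = ?R `` {x}" by (auto elim: quotientE)
    then obtain w where w: "w \<in> {1..2*n}" "X = ?cls w" using Occ_iff by auto
    then obtain s where s: "s \<in> run_starts n c" "chained c s w"
      using chained_to_run_start[OF n] by blast
    then have "X = ?cls s" using same_class[OF St[OF s(1)] w(1)] w(2) by simp
    then show "X \<in> ?cls ` run_starts n c" using s(1) by blast
  qed
  ultimately have "card (Occ n c // ?R) = card (run_starts n c)"
    using bij_betw_same_card unfolding bij_betw_def by metis
  then show ?thesis using card_run_starts[OF n] unfolding ncomp_def adj_def by simp
qed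


section \<open>String configurations are the break-free configurations\<close>

lemma card_filter_Suc:
  "card {k\<in>{1..Suc s}. P k} = card {k\<in>{1..s}. P k} + (if P (Suc s) then 1 else 0)"
proof -
  have "{k\<in>{1..Suc s}. P k} = (if P (Suc s) then insert (Suc s) {k\<in>{1..s}. P k} else {k\<in>{1..s}. P k})"
    by (auto simp: le_Suc_eq)
  then show ?thesis by simp
qed

(* the vertex after s steps of the string z: one step down-left (0) or down-right (1) *)
lemma strvtx_Suc:
  "strvtx z (Suc s) = (fst (strvtx z s) + (if z (Suc s) = 0 then 1 else 0),
                       snd (strvtx z s) + (if z (Suc s) = 1 then 1 else 0))"
  unfolding strvtx_def using card_filter_Suc by simp

lemma strvtx_0: "strvtx z 0 = (0,0)" unfolding strvtx_def by simp

lemma strvtx_dg: "(\<forall>k\<in>{1..s}. z k \<le> 1) \<Longrightarrow> dg (strvtx z s) = s"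
proof (induction s)
  case 0 then show ?case by (simp add: strvtx_0 dg_def)
next
  case (Suc s)
  have "z (Suc s) \<le> 1" using Suc.prems by simp
  then have "z (Suc s) = 0 \<or> z (Suc s) = 1" by auto
  then show ?case using Suc by (auto simp: strvtx_Suc dg_def)
qed

lemma strvtx_mono: "s \<le> t \<Longrightarrow> fst (strvtx z s) \<le> fst (strvtx z t) \<and> snd (strvtx z s) \<le> snd (strvtx z t)"
  unfolding strvtx_def by (auto intro!: card_mono)

lemma edge_eta: "e = (fst (upper e), snd (upper e), snd (snd e))"
  by (cases e) (simp add: upper_def)

lemma lower_eq: "lower e = (fst (upper e) + 1 - snd (snd e), snd (upper e) + snd (snd e))"
  by (cases e) (simp add: upper_def lower_def)

lemma lower_stredge:
  assumes "z w \<le> 1" "w \<ge> 1"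
  shows "lower (stredge z w) = strvtx z w"
proof -
  obtain t where t: "w = Suc t" using assms(2) by (cases w) auto
  show ?thesis using assms(1) unfolding stredge_def lower_def t by (auto simp: strvtx_Suc)
qed

(* a string is a monotone lattice path from (0,0) to (n,n) *)
lemma stredge_props:
  assumes z: "\<forall>k\<in>{1..2*n}. z k \<le> 1" and cz: "card {k\<in>{1..2*n}. z k = 1} = n"
    and w: "w \<in> {1..2*n}"
  shows "stredge z w \<in> Elin n w \<and> upper (stredge z w) = strvtx z (w - 1)
       \<and> lower (stredge z w) = strvtx z w"
proof -
  have end_vertex: "strvtx z (2*n) = (n,n)"
    using cz strvtx_dg[of "2*n" z] z unfolding strvtx_def dg_def by simp
  have in_grid: "strvtx z t \<in> Vert n" if "t \<le> 2*n" for t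
    using strvtx_mono[OF that, of z] end_vertex by (cases "strvtx z t") (auto simp: Vert_def)
  obtain t where t: "w = Suc t" using w by (cases w) auto
  have zw: "z w \<le> 1" using z w by auto
  have up: "upper (stredge z w) = strvtx z (w - 1)" by (simp add: stredge_def upper_def)
  have lw: "lower (stredge z w) = strvtx z w" using lower_stredge zw w by simp
  have "stredge z w \<in> Edges n"
    using in_grid[of t] in_grid[of w] w t zw lw unfolding Edges_def stredge_def lower_def
    by (auto simp: case_prod_beta)
  moreover have "line (stredge z w) = w"
    using strvtx_dg[of t z] z t w unfolding line_def stredge_def dg_def by auto
  ultimately show ?thesis using up lw unfolding Elin_def by simp
qed

lemma StrConf_breakfree:
  assumes "s \<in> StrConf n"
  shows "s \<in> Conf n \<and> brk n s = {}"
proof -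
  obtain x z where s: "s = strconf n x z" and xz: "\<forall>k\<in>{1..2*n}. x k \<le> 1 \<and> z k \<le> 1"
    and cz: "card {k\<in>{1..2*n}. z k = 1} = n"
    using assms unfolding StrConf_def by blast
  note ed = stredge_props[of n z, OF _ cz]
  have "s \<in> Conf n" unfolding Conf_def s strconf_def using ed xz by auto
  moreover have "linked s k" if "k \<in> {1..2*n-1}" for k
    using that ed[of k] ed[of "Suc k"] xz unfolding linked_def s strconf_def by auto
  ultimately show ?thesis unfolding brk_def by auto
qed

lemma breakfree_upper:
  assumes c: "c \<in> Conf n" and b: "brk n c = {}"
  shows "w \<in> {1..2*n} \<Longrightarrow> upper (fst (c w)) = strvtx (\<lambda>w. snd (snd (fst (c w)))) (w - 1)"
proof (induction w)
  case 0 then show ?case by simp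
next
  case (Suc w)
  let ?z = "\<lambda>w. snd (snd (fst (c w)))"
  show ?case
  proof (cases "w = 0")
    case True
    have "fst (c 1) \<in> Edges n" "line (fst (c 1)) = 1" using conf_facts[OF c Suc.prems] True by auto
    then show ?thesis using True strvtx_0 by (cases "fst (c 1)") (auto simp: line_def upper_def)
  next
    case False
    then have w: "w \<in> {1..2*n}" "w \<in> {1..2*n-1}" using Suc.prems by auto
    have "?z w \<le> 1" using conf_facts[OF c w(1)] by (cases "fst (c w)") (auto simp: Edges_def)
    then have "lower (fst (c w)) = strvtx ?z w"
      using Suc.IH[OF w(1)] lower_eq[of "fst (c w)"] False
      by (cases w) (auto simp: strvtx_Suc)
    then show ?thesis using b w(2) unfolding brk_def linked_def by auto
  qed
qed

(* conversely, a break-free configuration is the string of its edge directions; it ends at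
   (n,n), which forces exactly n right steps *)
lemma breakfree_StrConf:
  assumes c: "c \<in> Conf n" and b: "brk n c = {}" and n: "n \<ge> 1"
  shows "c \<in> StrConf n"
proof -
  define z where "z = (\<lambda>w. snd (snd (fst (c w))))"
  define x where "x = (\<lambda>w. snd (c w))"
  have z1: "z w \<le> 1" if "w \<in> {1..2*n}" for w
    using conf_facts[OF c that] unfolding z_def Edges_def by (cases "fst (c w)") auto
  have se: "fst (c w) = stredge z w" if "w \<in> {1..2*n}" for w
    using breakfree_upper[OF c b that] edge_eta unfolding stredge_def z_def by metis
  have n2: "2*n \<in> {1..2*n}" using n by auto
  have "lower (fst (c (2*n))) = (n,n)"
    using conf_facts[OF c n2] edge_facts[of "fst (c (2*n))" n]
    by (cases "lower (fst (c (2*n)))") (auto simp: Vert_def dg_def)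
  moreover have "lower (fst (c (2*n))) = strvtx z (2*n)"
    using se[OF n2] lower_stredge z1[OF n2] n by simp
  ultimately have cz: "card {k\<in>{1..2*n}. z k = 1} = n" unfolding strvtx_def by simp
  have "c = strconf n x z"
    using se conf_out[OF c] unfolding strconf_def x_def by (auto simp: fun_eq_iff prod_eq_iff)
  moreover have "\<forall>k\<in>{1..2*n}. x k \<le> 1 \<and> z k \<le> 1" using z1 conf_facts[OF c] unfolding x_def by auto
  ultimately show ?thesis unfolding StrConf_def using cz by blast
qed

theorem StrConf_eq: "n \<ge> 1 \<Longrightarrow> StrConf n = {c\<in>Conf n. brk n c = {}}"
  using StrConf_breakfree breakfree_StrConf by blast

lemma Sstring_eq:
  assumes n: "n \<ge> 1"
  shows "Sstring n = {\<psi>. \<forall>c. c \<notin> StrConf n \<longrightarrow> \<psi> c = 0}"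
proof -
  have fin: "finite (StrConf n)" using StrConf_eq[OF n] finite_Conf by simp
  have expand: "(\<lambda>c. \<Sum>s\<in>StrConf n. a s * ket s c) = (\<lambda>c. if c \<in> StrConf n then a c else 0)" for a
    using fin by (simp add: ket_def if_distrib cong: if_cong)
  show ?thesis unfolding Sstring_def expand
    by (auto simp: fun_eq_iff)
qed

(* a configuration with exactly one break: right along the upper-left side, then down *)
definition corner_conf :: "nat \<Rightarrow> conf" where
  "corner_conf n = (\<lambda>w. if w = 1 then ((0,0,1),0) else if 2 \<le> w \<and> w \<le> n then ((w-1,0,0),0)
      else if n+1 \<le> w \<and> w \<le> 2*n then ((n, w-n-1, 1),0) else dflt)"

lemma corner_conf_Conf: "n \<ge> 1 \<Longrightarrow> corner_conf n \<in> Conf n"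
  unfolding Conf_def corner_conf_def Elin_def Edges_def Vert_def line_def by auto

lemma corner_conf_brk:
  assumes n: "n \<ge> 1"
  shows "brk n (corner_conf n) = {1}"
proof -
  have linked_later: "linked (corner_conf n) k" if k: "2 \<le> k" "k \<le> 2*n-1" for k
  proof -
    consider "Suc k \<le> n" | "k = n" | "n < k" by linarith
    then show ?thesis
    proof cases
      case 1
      then show ?thesis using k unfolding linked_def corner_conf_def by (simp add: upper_def lower_def)
    next
      case 2
      then show ?thesis using k unfolding linked_def corner_conf_def by (simp add: upper_def lower_def)
    next
      case 3
      then have "k \<noteq> 1" "\<not> k \<le> n" "n+1 \<le> k" "k \<le> 2*n" "Suc k \<le> 2*n" "Suc k - n - 1 = k - n"
        using k n by auto
      then show ?thesis unfolding linked_def corner_conf_def by (simp add: upper_def lower_def)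
    qed
  qed
  have unlinked_1: "\<not> linked (corner_conf n) 1"
    using n unfolding linked_def corner_conf_def by (simp add: upper_def lower_def)
  show ?thesis unfolding brk_def
  proof (intro equalityI subsetI)
    fix k assume "k \<in> {k\<in>{1..2*n-1}. \<not> linked (corner_conf n) k}"
    then show "k \<in> {1}" using linked_later[of k] by (cases "2 \<le> k") auto
  next
    fix k :: nat assume "k \<in> {1}"
    then show "k \<in> {k\<in>{1..2*n-1}. \<not> linked (corner_conf n) k}" using n unlinked_1 by auto
  qed
qed


section \<open>Operators that preserve the breaks\<close>

(* a plaquette hop replaces the left path e1,e2 by the right path e3,e4 with equal endpoints *)
lemma hop_preserves_links:
  assumes h: "hop p a b g d c c' \<noteq> 0"
  shows "linked c k = linked c' k"
proof -
  obtain i j where p: "p = (i,j)" by (cases p)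
  let ?w = "i + j + 1"
  have h1: "c' ?w = (pe1 p, a)" "c' (Suc ?w) = (pe2 p, g)" "c ?w = (pe3 p, b)" "c (Suc ?w) = (pe4 p, d)"
    and h2: "\<And>v. v \<noteq> ?w \<Longrightarrow> v \<noteq> Suc ?w \<Longrightarrow> c v = c' v"
    using h unfolding hop_def p Let_def by (auto split: if_splits)
  consider "k = i + j" | "k = ?w" | "k = Suc ?w" | "k \<noteq> ?w \<and> k \<noteq> Suc ?w \<and> Suc k \<noteq> ?w \<and> Suc k \<noteq> Suc ?w"
    by linarith
  then show ?thesis
  proof cases
    case 1
    then have "c k = c' k" using h2 by simp
    then show ?thesis using h1 1 unfolding linked_def p by (simp add: pe1_def pe3_def upper_def)
  next
    case 2
    then show ?thesis using h1
      unfolding linked_def p by (simp add: pe1_def pe2_def pe3_def pe4_def upper_def lower_def)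
  next
    case 3
    then have "c (Suc k) = c' (Suc k)" using h2 by simp
    then show ?thesis using h1 3 unfolding linked_def p by (simp add: pe2_def pe4_def lower_def)
  next
    case 4
    then show ?thesis using h2 unfolding linked_def by metis
  qed
qed

lemma Hprop_preserves_breaks:
  assumes "Hprop U p c c' \<noteq> 0"
  shows "brk n c = brk n c'"
proof (rule ccontr)
  assume "brk n c \<noteq> brk n c'"
  then have "hop p a b g d c c' = 0" "hop p a b g d c' c = 0" for a b g d
    using hop_preserves_links unfolding brk_def by metis+
  then show False using assms unfolding Hprop_def Aprop_def by simp
qed

lemma Htot_preserves_breaks:
  assumes "Htot n Us lam c c' \<noteq> 0"
  shows "brk n c = brk n c'"
proof (cases "c = c'")
  case False
  have "Hstring n c c' = 0" using Hstring_diagonal False unfolding diagonal_def by blast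
  moreover have "opmul n (Nop e) (Nop e') c c' = 0" for e e'
    using False by (intro opmul_offdiag) (auto simp: Nop_offdiag)
  moreover have "Nop e c c' = 0" "nop e a c c' = 0" for e a
    using False by (simp_all add: Nop_offdiag nop_def)
  ultimately have "Htot n Us lam c c' = (\<Sum>p\<in>Plaq n. complex_of_real lam * Hprop (Us p) p c c')"
    unfolding Htot_def by simp
  then have "(\<Sum>p\<in>Plaq n. complex_of_real lam * Hprop (Us p) p c c') \<noteq> 0" using assms by simp
  then obtain p where "complex_of_real lam * Hprop (Us p) p c c' \<noteq> 0"
    using sum.not_neutral_contains_not_neutral by blast
  then have "Hprop (Us p) p c c' \<noteq> 0" by simp
  then show ?thesis by (rule Hprop_preserves_breaks)
qed simp


theorem mainTheorem3:
  fixes n :: nat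
  assumes "n \<ge> 1"
  shows "psd n (Hstring n)
    \<and> {\<psi>\<in>Vec n. apply_op n (Hstring n) \<psi> = (\<lambda>_. 0)} = Sstring n
    \<and> is_eigenvalue n (Hstring n) 2
    \<and> (\<forall>\<mu>. is_eigenvalue n (Hstring n) \<mu> \<longrightarrow> \<mu> = 0 \<or> (\<mu> \<in> \<real> \<and> 2 \<le> Re \<mu>))
    \<and> (\<forall>c\<in>Conf n. apply_op n (Hstring n) (ket c)
            = (\<lambda>c'. (2 * of_nat (ncomp n c) - 2) * ket c c'))
    \<and> (\<forall>e\<in>Edges n. \<forall>\<alpha>\<in>{0,1}. commute n (Hstring n) (nop e \<alpha>))
    \<and> (\<forall>U p. unitary2 U \<and> p \<in> Plaq n \<longrightarrow> commute n (Hstring n) (Hprop U p))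
    \<and> (\<forall>Us lam. (\<forall>p\<in>Plaq n. unitary2 (Us p)) \<and> lam \<in> {0..1}
            \<longrightarrow> commute n (Hstring n) (Htot n Us lam))"
proof -
  note H = Hstring_diagonal[of n]
  have psd: "psd n (Hstring n)"
    by (rule psd_diagonal[of _ _ "\<lambda>c. real (2 * card (brk n c))"]) (use H in simp_all)
  have null: "{\<psi>\<in>Vec n. apply_op n (Hstring n) \<psi> = (\<lambda>_. 0)} = Sstring n"
    unfolding nullspace_diagonal[OF H] Sstring_eq[OF assms] StrConf_eq[OF assms]
    by (auto simp: finite_brk card_gt_0_iff)
  have two: "is_eigenvalue n (Hstring n) 2"
    unfolding eigenvalue_diagonal[OF H]
    by (rule bexI[of _ "corner_conf n"]) (simp_all add: corner_conf_brk[OF assms] corner_conf_Conf[OF assms])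
  have gap: "\<forall>\<mu>. is_eigenvalue n (Hstring n) \<mu> \<longrightarrow> \<mu> = 0 \<or> (\<mu> \<in> \<real> \<and> 2 \<le> Re \<mu>)"
  proof (intro allI impI)
    fix \<mu> assume "is_eigenvalue n (Hstring n) \<mu>"
    then obtain c where "\<mu> = of_nat (2 * card (brk n c))" using eigenvalue_diagonal[OF H] by blast
    then show "\<mu> = 0 \<or> (\<mu> \<in> \<real> \<and> 2 \<le> Re \<mu>)" by (cases "card (brk n c)") auto
  qed
  have eigvec: "\<forall>c\<in>Conf n. apply_op n (Hstring n) (ket c)
            = (\<lambda>c'. (2 * of_nat (ncomp n c) - 2) * ket c c')"
    using ket_eigenvector[OF H] ncomp_eq[OF _ assms] by simp
  have commute: "commute n (Hstring n) B" if "\<And>c c'. B c c' \<noteq> 0 \<Longrightarrow> brk n c = brk n c'" for B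
    using commute_diagonal[OF H] that by metis
  have "\<forall>e\<in>Edges n. \<forall>\<alpha>\<in>{0,1}. commute n (Hstring n) (nop e \<alpha>)"
    by (intro ballI commute) (simp add: nop_def split: if_splits)
  moreover have "\<forall>U p. unitary2 U \<and> p \<in> Plaq n \<longrightarrow> commute n (Hstring n) (Hprop U p)"
    by (intro allI impI commute) (erule Hprop_preserves_breaks)
  moreover have "\<forall>Us lam. (\<forall>p\<in>Plaq n. unitary2 (Us p)) \<and> lam \<in> {0..1}
            \<longrightarrow> commute n (Hstring n) (Htot n Us lam)"
    by (intro allI impI commute) (erule Htot_preserves_breaks)
  ultimately show ?thesis using psd null two gap eigvec by blast
qed

end
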